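(* Let $s\ge 3$ be an integer, let $a,a_3,\dots,a_s\in\mathbb{R}$, and let \[ \psi(z)=\frac{1+\left(1-as\right)z+\left(\tfrac12-as+a^2\binom{s}{2}\right)z^2+\sum_{n=3}^{s}a_nz^n}{(1-az)^s}. \] (Every element of $\widehat{\Pi}_{s/s,2}$ can be written in this form.) If $R(\psi)>s-1$, then $a>0$.
   Context: A real rational function $\psi$ is always considered in lowest terms, as a smooth function on $\mathbb{R}$ minus its finitely many poles. It is absolutely monotonic at $x\in\mathbb{R}$ if $x$ is not a pole and $\psi^{(k)}(x)\ge 0$ for all integers $k\ge 0$. The radius of absolute monotonicity is $R(\psi)=\sup\big(\{r\in[0,\infty): \psi \text{ is absolutely monotonic at each point of } [-r,0]\}\cup\{0\}\big)\in[0,+\infty]$. $\widehat{\Pi}_{s/s,2}$ denotes the set of real rational functions $\psi(z)=P(z)/(1-az)^s$ with $P$ a real polynomial of degree at most $s$ and $a\in\mathbb{R}$, such that $\psi(z)-e^z=O(z^3)$ as $z\to0$. *)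

theory Defs
  imports "HOL-Analysis.Analysis" "HOL-Computational_Algebra.Polynomial_Factorial" "HOL-Computational_Algebra.Field_as_Ring"
begin

text \<open>A real rational function is given by a numerator p and a nonzero denominator q;
  it is always considered in lowest terms, i.e. as p' / q' with p' = p div gcd p q and
  q' = q div gcd p q. Its poles are the real roots of q'.\<close>

definition rf_num :: "real poly \<Rightarrow> real poly \<Rightarrow> real poly" where
  "rf_num p q = p div gcd p q"

definition rf_den :: "real poly \<Rightarrow> real poly \<Rightarrow> real poly" where
  "rf_den p q = q div gcd p q"

definition rf_fun :: "real poly \<Rightarrow> real poly \<Rightarrow> real \<Rightarrow> real" where
  "rf_fun p q = (\<lambda>y. poly (rf_num p q) y / poly (rf_den p q) y)"

definition abs_monotonic_at :: "real poly \<Rightarrow> real poly \<Rightarrow> real \<Rightarrow> bool" where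
  "abs_monotonic_at p q x \<longleftrightarrow>
     poly (rf_den p q) x \<noteq> 0 \<and> (\<forall>k::nat. (deriv ^^ k) (rf_fun p q) x \<ge> 0)"

definition radius_abs_mono :: "real poly \<Rightarrow> real poly \<Rightarrow> ereal" where
  "radius_abs_mono p q =
     Sup ({ereal r | r. r \<ge> 0 \<and> (\<forall>x\<in>{-r..0}. abs_monotonic_at p q x)} \<union> {0})"

end

theory Submission
  imports Defs
begin

text \<open>Suppose a \<le> 0 and \<psi> is absolutely monotonic on [-r, 0] with r > s - 1. In lowest terms
  \<psi> = N / (1 - a z)^t with t \<le> s, deg N \<le> t, and N(z) \<equiv> e^z (1 - a z)^t mod z^3.
  As a \<le> 0 and [-r, 0] contains no pole, (1 - a z)^t is absolutely monotonic there, hence by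
  Leibniz' rule so is the polynomial N = \<psi> (1 - a z)^t. An absolutely monotonic polynomial Q of
  degree \<le> m on [-r, 0] satisfies (x + r) Q'(x) \<le> m Q(x); for Q = N' at x = 0 this reads
  r N''(0) \<le> (t - 1) N'(0). But N'(0) = 1 - a t > 0 and N''(0) = 1 - 2 a t + a^2 t (t - 1) \<ge> N'(0),
  so r \<le> t - 1 \<le> s - 1, a contradiction.\<close>

section \<open>Higher derivatives of real functions\<close>

lemma higher_deriv_poly: "(deriv ^^ k) (poly P) = poly ((pderiv ^^ k) P)"
proof (induction k)
  case (Suc k)
  show ?case
    by (simp add: Suc fun_eq_iff) (meson DERIV_imp_deriv poly_DERIV)
qed simp

lemma higher_deriv_cong_open:
  fixes f g :: "real \<Rightarrow> real"
  assumes "open U" "\<And>y. y \<in> U \<Longrightarrow> f y = g y" "x \<in> U"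
  shows "(deriv ^^ k) f x = (deriv ^^ k) g x"
  using assms(3)
proof (induction k arbitrary: x)
  case (Suc k)
  have "eventually (\<lambda>y. y \<in> U) (nhds x)"
    using assms(1) Suc.prems eventually_nhds_in_open by blast
  then have "eventually (\<lambda>y. (deriv ^^ k) f y = (deriv ^^ k) g y) (nhds x)"
    by (rule eventually_mono) (use Suc.IH in auto)
  then show ?case by (simp add: deriv_cong_ev)
qed (use assms in simp)

definition smooth_on :: "(real \<Rightarrow> real) \<Rightarrow> real set \<Rightarrow> bool" where
  "smooth_on f U \<longleftrightarrow> (\<forall>k. \<forall>x\<in>U. (deriv ^^ k) f differentiable (at x))"

lemma smooth_on_poly: "smooth_on (poly P) U"
  unfolding smooth_on_def higher_deriv_poly real_differentiable_def
  by (meson poly_DERIV)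

lemma open_poly_nonzero: "open {x :: real. poly D x \<noteq> 0}"
  by (rule open_Collect_neq) (auto intro: continuous_intros)

lemma has_real_derivative_poly_over_power:
  fixes A D :: "real poly"
  assumes "poly D x \<noteq> 0"
  shows "((\<lambda>y. poly A y / poly D y ^ Suc k) has_real_derivative
           poly (pderiv A * D - smult (real (Suc k)) (A * pderiv D)) x / poly D x ^ Suc (Suc k)) (at x)"
proof -
  have "((\<lambda>y. poly D y ^ Suc k) has_real_derivative
      (1 + real k) * (poly (pderiv D) x * poly D x ^ k)) (at x)"
    by (rule DERIV_power_Suc[OF poly_DERIV])
  moreover have "poly D x ^ Suc k \<noteq> 0" using assms by simp
  ultimately
  have "((\<lambda>y. poly A y / poly D y ^ Suc k) has_real_derivative
      (poly (pderiv A) x * poly D x ^ Suc k - poly A x * ((1 + real k) * (poly (pderiv D) x * poly D x ^ k)))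
        / (poly D x ^ Suc k * poly D x ^ Suc k)) (at x)"
    by (rule DERIV_divide[OF poly_DERIV])
  also have "poly (pderiv A) x * poly D x ^ Suc k - poly A x * ((1 + real k) * (poly (pderiv D) x * poly D x ^ k))
      = poly (pderiv A * D - smult (real (Suc k)) (A * pderiv D)) x * poly D x ^ k"
    by (simp add: algebra_simps)
  also have "poly D x ^ Suc k * poly D x ^ Suc k = poly D x ^ Suc (Suc k) * poly D x ^ k"
    by (simp flip: power_add)
  finally show ?thesis
    using assms by simp
qed

lemma higher_deriv_poly_quotient:
  fixes N D :: "real poly"
  obtains A where "\<And>x. poly D x \<noteq> 0 \<Longrightarrow>
    (deriv ^^ k) (\<lambda>y. poly N y / poly D y) x = poly A x / poly D x ^ Suc k"
proof (induction k arbitrary: thesis)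
  case 0
  then show ?case using 0[of N] by simp
next
  case (Suc k)
  obtain A where A: "\<And>x. poly D x \<noteq> 0 \<Longrightarrow>
      (deriv ^^ k) (\<lambda>y. poly N y / poly D y) x = poly A x / poly D x ^ Suc k"
    using Suc.IH by blast
  define B where "B = pderiv A * D - smult (real (Suc k)) (A * pderiv D)"
  have "(deriv ^^ Suc k) (\<lambda>y. poly N y / poly D y) x = poly B x / poly D x ^ Suc (Suc k)"
    if x: "poly D x \<noteq> 0" for x
  proof -
    have "((deriv ^^ k) (\<lambda>y. poly N y / poly D y) has_real_derivative
        poly B x / poly D x ^ Suc (Suc k)) (at x)"
      unfolding B_def
      by (rule has_field_derivative_transform_within_open
          [OF has_real_derivative_poly_over_power[OF x] open_poly_nonzero]) (use x A in auto)
    then show ?thesis by (simp add: DERIV_imp_deriv)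
  qed
  then show ?case using Suc.prems by blast
qed

lemma smooth_on_poly_quotient:
  fixes N D :: "real poly"
  shows "smooth_on (\<lambda>y. poly N y / poly D y) {x. poly D x \<noteq> 0}"
  unfolding smooth_on_def
proof (intro allI ballI)
  fix k x assume x: "x \<in> {x. poly D x \<noteq> 0}"
  obtain A where A: "\<And>x. poly D x \<noteq> 0 \<Longrightarrow>
      (deriv ^^ k) (\<lambda>y. poly N y / poly D y) x = poly A x / poly D x ^ Suc k"
    using higher_deriv_poly_quotient by blast
  have "((deriv ^^ k) (\<lambda>y. poly N y / poly D y) has_real_derivative
      poly (pderiv A * D - smult (real (Suc k)) (A * pderiv D)) x / poly D x ^ Suc (Suc k)) (at x)"
    by (rule has_field_derivative_transform_within_open
        [OF has_real_derivative_poly_over_power open_poly_nonzero]) (use x A in auto)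
  then show "(deriv ^^ k) (\<lambda>y. poly N y / poly D y) differentiable (at x)"
    unfolding real_differentiable_def by blast
qed

text \<open>The Pascal step of Leibniz' rule, with the summand in the shape produced by DERIV_mult.\<close>

lemma sum_choose_Suc_Leibniz:
  fixes F G :: "nat \<Rightarrow> real"
  shows "(\<Sum>i = 0..n. real (n choose i) * (F (Suc i) * G (n - i) + G (Suc (n - i)) * F i))
       = (\<Sum>i = 0..Suc n. real (Suc n choose i) * F i * G (Suc n - i))"
proof -
  have Suc_top: "(\<Sum>i = 0..Suc n. real (Suc n choose i) * F i * G (Suc n - i))
      = F 0 * G (Suc n) + (\<Sum>i = 0..n. real (n choose i) * F (Suc i) * G (n - i))
          + (\<Sum>i = 0..n. real (n choose Suc i) * F (Suc i) * G (n - i))"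
    by (subst sum.atLeast0_atMost_Suc_shift) (simp add: sum.distrib algebra_simps)
  have "(\<Sum>i = 0..n. real (n choose i) * F i * G (Suc (n - i)))
      = (\<Sum>i = 0..Suc n. real (n choose i) * F i * G (Suc n - i))"
    by (simp add: Suc_diff_le)
  also have "\<dots> = F 0 * G (Suc n) + (\<Sum>i = 0..n. real (n choose Suc i) * F (Suc i) * G (n - i))"
    by (subst sum.atLeast0_atMost_Suc_shift) simp
  finally have Suc_bottom: "(\<Sum>i = 0..n. real (n choose i) * F i * G (Suc (n - i)))
      = F 0 * G (Suc n) + (\<Sum>i = 0..n. real (n choose Suc i) * F (Suc i) * G (n - i))" .
  show ?thesis
    using Suc_bottom Suc_top unfolding distrib_left sum.distrib by (simp add: mult_ac)
qed

lemma higher_deriv_mult_real: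
  fixes f g :: "real \<Rightarrow> real"
  assumes "smooth_on f U" "smooth_on g U" "open U" "x \<in> U"
  shows "(deriv ^^ n) (\<lambda>y. f y * g y) x =
         (\<Sum>i = 0..n. real (n choose i) * (deriv ^^ i) f x * (deriv ^^ (n - i)) g x)"
  using assms(4)
proof (induction n arbitrary: x)
  case (Suc n x)
  have df: "\<And>i. ((deriv ^^ i) f has_real_derivative (deriv ^^ Suc i) f x) (at x)"
   and dg: "\<And>i. ((deriv ^^ i) g has_real_derivative (deriv ^^ Suc i) g x) (at x)"
    using Suc.prems assms(1,2) unfolding smooth_on_def
    by (simp_all add: DERIV_deriv_iff_real_differentiable)
  have "((\<lambda>y. \<Sum>i = 0..n. real (n choose i) * ((deriv ^^ i) f y * (deriv ^^ (n - i)) g y))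
      has_real_derivative
        (\<Sum>i = 0..Suc n. real (Suc n choose i) * (deriv ^^ i) f x * (deriv ^^ (Suc n - i)) g x))
      (at x)"
    unfolding sum_choose_Suc_Leibniz[of n "\<lambda>i. (deriv ^^ i) f x" "\<lambda>i. (deriv ^^ i) g x", symmetric]
    by (intro DERIV_sum DERIV_cmult DERIV_mult[OF df dg])
  then have "((deriv ^^ n) (\<lambda>y. f y * g y) has_real_derivative
      (\<Sum>i = 0..Suc n. real (Suc n choose i) * (deriv ^^ i) f x * (deriv ^^ (Suc n - i)) g x)) (at x)"
    by (rule has_field_derivative_transform_within_open[OF _ \<open>open U\<close> Suc.prems])
       (simp only: Suc.IH mult.assoc)
  then show ?case
    unfolding funpow.simps o_apply by (rule DERIV_imp_deriv)
qed simp

section \<open>Absolute monotonicity on a set\<close>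

definition abs_mono_on :: "(real \<Rightarrow> real) \<Rightarrow> real set \<Rightarrow> bool" where
  "abs_mono_on f I \<longleftrightarrow> (\<forall>k. \<forall>x\<in>I. 0 \<le> (deriv ^^ k) f x)"

lemma abs_mono_on_poly_iff:
  "abs_mono_on (poly P) I \<longleftrightarrow> (\<forall>k. \<forall>x\<in>I. 0 \<le> poly ((pderiv ^^ k) P) x)"
  by (simp add: abs_mono_on_def higher_deriv_poly)

lemma abs_mono_on_poly_pderiv: "abs_mono_on (poly P) I \<Longrightarrow> abs_mono_on (poly (pderiv P)) I"
  unfolding abs_mono_on_poly_iff by (metis funpow_Suc_right o_apply)

lemma abs_mono_on_cong_open:
  assumes "open U" "I \<subseteq> U" "\<And>y. y \<in> U \<Longrightarrow> f y = g y" "abs_mono_on f I"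
  shows "abs_mono_on g I"
  using assms higher_deriv_cong_open[OF assms(1,3)] by (auto simp: abs_mono_on_def subset_iff)

lemma abs_mono_on_mult:
  assumes "smooth_on f U" "smooth_on g U" "open U" "I \<subseteq> U" "abs_mono_on f I" "abs_mono_on g I"
  shows "abs_mono_on (\<lambda>y. f y * g y) I"
  unfolding abs_mono_on_def
proof (intro allI ballI)
  fix k x assume x: "x \<in> I"
  have "0 \<le> (\<Sum>i = 0..k. real (k choose i) * (deriv ^^ i) f x * (deriv ^^ (k - i)) g x)"
    using x assms(5,6) by (auto simp: abs_mono_on_def intro!: sum_nonneg)
  also have "\<dots> = (deriv ^^ k) (\<lambda>y. f y * g y) x"
    using x assms(4) by (intro higher_deriv_mult_real[OF assms(1-3), symmetric]) blast
  finally show "0 \<le> (deriv ^^ k) (\<lambda>y. f y * g y) x" .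
qed

text \<open>The derivative of m Q(x) - (x + r) Q'(x) is the same expression for Q' and m - 1, so by
  induction on m it is nondecreasing on [-r, 0]; at -r it equals m Q(-r) \<ge> 0.\<close>

lemma abs_mono_poly_deriv_bound:
  fixes Q :: "real poly"
  assumes "degree Q \<le> m" "abs_mono_on (poly Q) {-r..0}" "x \<in> {-r..0}"
  shows "(x + r) * poly (pderiv Q) x \<le> real m * poly Q x"
  using assms
proof (induction m arbitrary: Q x)
  case 0
  then have "pderiv Q = 0" by (simp add: pderiv_eq_0_iff)
  then show ?case by simp
next
  case (Suc m)
  have deg: "degree (pderiv Q) \<le> m"
    using Suc.prems(1) degree_pderiv by (metis diff_Suc_1 diff_le_mono)
  define R where "R y = real (Suc m) * poly Q y - (y + r) * poly (pderiv Q) y" for y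
  have "R (-r) \<le> R x"
  proof (rule DERIV_nonneg_imp_nondecreasing[of "-r" x R])
    show "- r \<le> x" using Suc.prems(3) by simp
    fix y assume "- r \<le> y" "y \<le> x"
    then have "y \<in> {-r..0}" using Suc.prems(3) by auto
    then have "0 \<le> real m * poly (pderiv Q) y - (y + r) * poly (pderiv (pderiv Q)) y"
      using Suc.IH[OF deg abs_mono_on_poly_pderiv[OF Suc.prems(2)]] by simp
    moreover have "(R has_real_derivative
        real m * poly (pderiv Q) y - (y + r) * poly (pderiv (pderiv Q)) y) (at y)"
      unfolding R_def by (auto intro!: derivative_eq_intros simp: algebra_simps)
    ultimately show "\<exists>z. (R has_real_derivative z) (at y) \<and> 0 \<le> z" by blast
  qed
  moreover have "0 \<le> poly Q (-r)"
    using Suc.prems(2,3) by (auto simp: abs_mono_on_poly_iff dest: spec[of _ 0])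
  then have "0 \<le> R (-r)" by (simp add: R_def)
  ultimately show ?case
    using Suc.prems(3) by (simp add: R_def)
qed

section \<open>Powers of 1 - a z\<close>

lemma pderiv_linear_power: "pderiv ([:1, -a:] ^ n) = smult (real n * (-a)) ([:1, -a:] ^ (n - 1))"
proof (cases n)
  case (Suc m)
  have "pderiv [:1, -a:] = [:-a:]" by (simp add: pderiv_pCons)
  then show ?thesis
    unfolding Suc by (simp only: pderiv_power_Suc) (simp add: mult_ac)
qed simp

lemma higher_pderiv_linear_power:
  "(pderiv ^^ k) ([:1, -a:] ^ t) = smult ((-a) ^ k * real (\<Prod>i<k. t - i)) ([:1, -a:] ^ (t - k))"
proof (induction k)
  case (Suc k)
  have "(pderiv ^^ Suc k) ([:1, -a:] ^ t)
      = smult ((-a) ^ k * real (\<Prod>i<k. t - i)) (pderiv ([:1, -a:] ^ (t - k)))"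
    by (simp add: Suc pderiv_smult)
  also have "\<dots> = smult ((-a) ^ Suc k * real (\<Prod>i<Suc k. t - i)) ([:1, -a:] ^ (t - Suc k))"
    by (simp add: pderiv_linear_power smult_smult mult_ac)
  finally show ?case .
qed simp

lemma abs_mono_on_linear_power:
  assumes "a \<le> 0" "\<forall>x\<in>{-r..0}. poly ([:1, -a:] ^ t) x \<noteq> 0"
  shows "abs_mono_on (poly ([:1, -a:] ^ t)) {-r..0}"
  unfolding abs_mono_on_poly_iff higher_pderiv_linear_power
proof (intro allI ballI)
  fix k x assume x: "x \<in> {-r..0}"
  have "0 \<le> 1 - a * x \<or> t - k = 0"
  proof (rule ccontr)
    assume "\<not> ?thesis"
    then have ax: "1 < a * x" and "0 < t" by auto
    then have "a \<noteq> 0" by auto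
    with assms(1) have "a < 0" by simp
    then have "x < 1 / a" using ax by (simp add: neg_less_divide_eq mult.commute)
    then have "1 / a \<in> {-r..0}" using x \<open>a < 0\<close> by auto
    moreover have "poly ([:1, -a:] ^ t) (1 / a) = 0" using \<open>a < 0\<close> \<open>0 < t\<close> by simp
    ultimately show False using assms(2) by blast
  qed
  then have "0 \<le> poly ([:1, -a:] ^ (t - k)) x" by (auto simp: mult.commute)
  moreover have "0 \<le> (-a) ^ k" using assms(1) by simp
  ultimately show "0 \<le> poly (smult ((-a) ^ k * real (\<Prod>i<k. t - i)) ([:1, -a:] ^ (t - k))) x"
    by (simp del: poly_power of_nat_prod)
qed

lemma coeff_linear_power_binomial: "coeff ([:1, -a:] ^ e) k = real (e choose k) * (-a) ^ k"
proof (induction e arbitrary: k)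
  case (Suc e)
  then show ?case
    by (cases k) (simp_all add: coeff_pCons algebra_simps)
qed simp

lemma of_nat_choose_two: "real (n choose 2) = real n * (real n - 1) / 2"
proof (induction n)
  case (Suc n)
  have "Suc n choose 2 = n + (n choose 2)"
    by (simp add: numeral_2_eq_2)
  then show ?case using Suc by (simp add: field_simps)
qed simp

text \<open>P(z) agrees with e^z (1 - a z)^k up to order z^2, i.e. P(z) / (1 - a z)^k - e^z = O(z^3).\<close>

definition exp_jet2 :: "real \<Rightarrow> nat \<Rightarrow> real poly \<Rightarrow> bool" where
  "exp_jet2 a k P \<longleftrightarrow> coeff P 0 = 1 \<and> coeff P 1 = 1 - a * real k \<and>
     coeff P 2 = 1/2 - a * real k + a^2 * real (k choose 2)"

lemma exp_jet2_cancel_linear_power: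
  assumes "exp_jet2 a (t + e) (N * [:1, -a:] ^ e)"
  shows "exp_jet2 a t N"
proof -
  have coeffs: "coeff (N * [:1, -a:] ^ e) 0 = coeff N 0"
    "coeff (N * [:1, -a:] ^ e) 1 = coeff N 1 - a * real e * coeff N 0"
    "coeff (N * [:1, -a:] ^ e) 2 = coeff N 2 - a * real e * coeff N 1 + a^2 * real (e choose 2) * coeff N 0"
    by (simp_all add: coeff_mult coeff_linear_power_binomial numeral_2_eq_2 atMost_Suc power2_eq_square)
  note jet = assms[unfolded exp_jet2_def coeffs]
  have c0: "coeff N 0 = 1"
    using jet by simp
  have c1: "coeff N 1 = 1 - a * real t"
    using jet c0 by (simp add: algebra_simps)
  have "coeff N 2 = 1/2 - a * real t + a^2 * real (t choose 2)"
    using jet c0 by (simp add: c1[unfolded One_nat_def] of_nat_choose_two field_simps power2_eq_square)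
  with c0 c1 show ?thesis by (simp add: exp_jet2_def)
qed

section \<open>Rational functions in lowest terms\<close>

lemma dvd_prime_elem_power_poly:
  fixes L d :: "'a :: field_gcd poly"
  assumes "prime_elem L" "d dvd L ^ s"
  shows "\<exists>c t. c \<noteq> 0 \<and> t \<le> s \<and> d = smult c (L ^ t)"
  using assms(2)
proof (induction s arbitrary: d)
  case 0
  then obtain c where "d = [:c:]" "is_unit c" by (auto simp: is_unit_poly_iff)
  then show ?case by (intro exI[of _ c] exI[of _ 0]) auto
next
  case (Suc s)
  show ?case
  proof (cases "L dvd d")
    case True
    then obtain d' where d': "d = L * d'" by (auto elim: dvdE)
    have "L \<noteq> 0" using assms(1) by auto
    then have "d' dvd L ^ s" using Suc.prems d' by simp
    from Suc.IH[OF this] obtain c t where "c \<noteq> 0" "t \<le> s" "d' = smult c (L ^ t)" by blast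
    then show ?thesis using d' by (intro exI[of _ c] exI[of _ "Suc t"]) auto
  next
    case False
    then have "coprime d L"
      using assms(1) by (meson coprime_commute prime_elem_imp_coprime)
    then have "d dvd L ^ s"
      using Suc.prems by (simp add: coprime_dvd_mult_right_iff)
    from Suc.IH[OF this] obtain c t where "c \<noteq> 0" "t \<le> s" "d = smult c (L ^ t)" by blast
    then show ?thesis by (intro exI[of _ c] exI[of _ t]) auto
  qed
qed

lemma rf_num_mult_eq:
  assumes "q \<noteq> 0"
  shows "rf_num p q * q = rf_den p q * p"
proof -
  have "q = rf_den p q * gcd p q" and "p = rf_num p q * gcd p q"
    by (simp_all add: rf_num_def rf_den_def)
  then show ?thesis by (metis mult.assoc mult.commute)
qed

lemma rf_den_dvd: "rf_den p q dvd q"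
  unfolding rf_den_def by (metis dvd_div_mult_self gcd_dvd2 dvd_triv_left)

lemma rf_fun_eq_quotient:
  assumes "q \<noteq> 0" "rf_den p q = smult c D" "c \<noteq> 0"
  obtains N where "N * q = D * p" "rf_fun p q = (\<lambda>y. poly N y / poly D y)"
proof
  define N where "N = smult (1 / c) (rf_num p q)"
  have num: "rf_num p q = smult c N"
    using assms(3) by (simp add: N_def)
  have "N * q = smult (1 / c) (rf_num p q * q)"
    by (simp add: N_def)
  also have "\<dots> = D * p"
    using assms(3) by (simp add: rf_num_mult_eq[OF assms(1)] assms(2))
  finally show "N * q = D * p" .
  show "rf_fun p q = (\<lambda>y. poly N y / poly D y)"
    using assms(3) by (simp add: rf_fun_def num assms(2))
qed

lemma rf_over_linear_power:
  fixes p :: "real poly"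
  assumes "degree p \<le> s"
  obtains t N where "t \<le> s" "N * [:1, -a:] ^ (s - t) = p" "degree N \<le> t"
    "rf_fun p ([:1, -a:] ^ s) = (\<lambda>y. poly N y / poly ([:1, -a:] ^ t) y)"
    "\<And>x. poly (rf_den p ([:1, -a:] ^ s)) x = 0 \<longleftrightarrow> poly ([:1, -a:] ^ t) x = 0"
proof -
  let ?L = "[:1, -a:]"
  have L: "?L ^ n \<noteq> 0" for n by simp
  \<comment> \<open>For a = 0 every exponent t fits; t = s is the choice that keeps deg N \<le> t.\<close>
  obtain c t where c: "c \<noteq> 0" and "t \<le> s" and den: "rf_den p (?L ^ s) = smult c (?L ^ t)"
    and deg_L: "a = 0 \<longrightarrow> t = s"
  proof (cases "a = 0")
    case True
    then have L1: "?L = 1" by (simp add: one_pCons)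
    then have "is_unit (rf_den p (?L ^ s))"
      using rf_den_dvd[of p "?L ^ s"] by simp
    then obtain c where "rf_den p (?L ^ s) = [:c:]" "is_unit c" by (auto simp: is_unit_poly_iff)
    moreover have "[:c:] = smult c (?L ^ s)" using L1 by simp
    moreover have "c \<noteq> 0" using \<open>is_unit c\<close> by auto
    ultimately show ?thesis using that[of c s] by simp
  next
    case False
    then have "prime_elem ?L" by (intro prime_elem_linear_field_poly) simp
    from dvd_prime_elem_power_poly[OF this rf_den_dvd] False show ?thesis using that by blast
  qed
  obtain N where N: "N * ?L ^ s = ?L ^ t * p" and rf: "rf_fun p (?L ^ s) = (\<lambda>y. poly N y / poly (?L ^ t) y)"
    using rf_fun_eq_quotient[OF L den c] by blast
  have "?L ^ t * (N * ?L ^ (s - t)) = ?L ^ t * p"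
    using N \<open>t \<le> s\<close> by (metis le_add_diff_inverse mult.left_commute power_add)
  then have Np: "N * ?L ^ (s - t) = p" using L by simp
  have "degree N \<le> t"
  proof (cases "a = 0 \<or> N = 0")
    case True
    then show ?thesis using Np deg_L assms by (auto simp: one_pCons)
  next
    case False
    then have "degree p = degree N + (s - t)"
      using Np by (auto simp: degree_mult_eq degree_power_eq)
    then show ?thesis using assms \<open>t \<le> s\<close> by simp
  qed
  moreover have "poly (rf_den p (?L ^ s)) x = 0 \<longleftrightarrow> poly (?L ^ t) x = 0" for x
    using c by (simp add: den)
  ultimately show ?thesis using that \<open>t \<le> s\<close> Np rf by blast
qed

section \<open>The radius bound\<close>

lemma radius_abs_mono_gtE:
  assumes "ereal \<rho> < radius_abs_mono p q" "0 \<le> \<rho>"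
  obtains r where "\<rho> < r" "\<forall>x\<in>{-r..0}. abs_monotonic_at p q x"
proof -
  obtain z where z: "z \<in> {ereal r | r. r \<ge> 0 \<and> (\<forall>x\<in>{-r..0}. abs_monotonic_at p q x)} \<union> {0}"
    and "ereal \<rho> < z"
    using assms(1) unfolding radius_abs_mono_def less_Sup_iff by blast
  then have "z \<noteq> 0" using assms(2) by (auto simp: zero_ereal_def)
  with z \<open>ereal \<rho> < z\<close> show ?thesis using that by auto
qed

lemma abs_mono_on_numerator:
  assumes "a \<le> 0" "\<forall>x\<in>{-r..0}. poly ([:1, -a:] ^ t) x \<noteq> 0"
    and "abs_mono_on (\<lambda>y. poly N y / poly ([:1, -a:] ^ t) y) {-r..0}"
  shows "abs_mono_on (poly N) {-r..0}"
proof -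
  let ?D = "[:1, -a:] ^ t"
  have "abs_mono_on (\<lambda>y. poly N y / poly ?D y * poly ?D y) {-r..0}"
    by (rule abs_mono_on_mult[OF smooth_on_poly_quotient smooth_on_poly open_poly_nonzero])
       (use assms abs_mono_on_linear_power in auto)
  moreover have "{-r..0} \<subseteq> {x. poly ?D x \<noteq> 0}" using assms(2) by auto
  ultimately show ?thesis
    by (rule abs_mono_on_cong_open[OF open_poly_nonzero, rotated 2]) auto
qed

lemma exp_jet2_abs_mono_radius_le:
  fixes N :: "real poly"
  assumes "degree N \<le> t" "exp_jet2 a t N" "a \<le> 0" "0 \<le> r" "abs_mono_on (poly N) {-r..0}"
  shows "r \<le> real t - 1"
proof (cases "t = 0")
  case True
  then show ?thesis using assms(1,2) by (auto simp: exp_jet2_def coeff_eq_0)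
next
  case False
  have "poly (pderiv N) 0 = coeff N 1"
    by (simp add: poly_0_coeff_0 coeff_pderiv)
  then have N1: "poly (pderiv N) 0 = 1 - a * real t"
    using assms(2) by (simp add: exp_jet2_def)
  have "poly (pderiv (pderiv N)) 0 = 2 * coeff N 2"
    by (simp add: poly_0_coeff_0 coeff_pderiv numeral_2_eq_2)
  then have N2: "poly (pderiv (pderiv N)) 0 = 1 - 2 * a * real t + a^2 * real t * (real t - 1)"
    using assms(2) by (simp add: exp_jet2_def of_nat_choose_two field_simps)
  have pos: "0 < 1 - a * real t"
    using mult_nonpos_nonneg[OF assms(3), of "real t"] by simp
  have "1 - a * real t \<le> poly (pderiv (pderiv N)) 0"
  proof -
    have "0 \<le> - a * real t" using mult_nonpos_nonneg[OF assms(3), of "real t"] by simp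
    moreover have "0 \<le> a^2 * real t * (real t - 1)" using False by simp
    ultimately show ?thesis unfolding N2 by linarith
  qed
  then have "r * (1 - a * real t) \<le> r * poly (pderiv (pderiv N)) 0"
    using assms(4) by (rule mult_left_mono)
  also have "\<dots> \<le> real (t - 1) * poly (pderiv N) 0"
    using abs_mono_poly_deriv_bound[OF _ abs_mono_on_poly_pderiv[OF assms(5)], of "t - 1" 0]
      assms(1,4) by (simp add: degree_pderiv)
  also have "\<dots> = (real t - 1) * (1 - a * real t)"
    using False N1 by (simp add: of_nat_diff)
  finally show ?thesis
    using pos by simp
qed

theorem mainTheorem2:
  fixes s :: nat and a :: real and c :: "nat \<Rightarrow> real"
  assumes "s \<ge> 3"
  assumes "radius_abs_mono
             ([:1, 1 - a * real s, 1/2 - a * real s + a^2 * real (s choose 2):]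
               + (\<Sum>n = 3..s. monom (c n) n))
             ([:1, - a:] ^ s) > ereal (real s - 1)"
  shows "a > 0"
proof (rule ccontr)
  assume "\<not> a > 0"
  then have a: "a \<le> 0" by simp
  define p where "p = [:1, 1 - a * real s, 1/2 - a * real s + a^2 * real (s choose 2):]
    + (\<Sum>n = 3..s. monom (c n) n)"
  have "degree p \<le> s"
    unfolding p_def using assms(1)
    by (intro degree_add_le degree_sum_le) (auto intro: order.trans[OF degree_monom_le])
  obtain t N where "t \<le> s" and p: "N * [:1, -a:] ^ (s - t) = p" and "degree N \<le> t"
    and rf: "rf_fun p ([:1, -a:] ^ s) = (\<lambda>y. poly N y / poly ([:1, -a:] ^ t) y)"
    and poles: "\<And>x. poly (rf_den p ([:1, -a:] ^ s)) x = 0 \<longleftrightarrow> poly ([:1, -a:] ^ t) x = 0"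
    using rf_over_linear_power[OF \<open>degree p \<le> s\<close>] by blast
  have "exp_jet2 a s p"
    by (auto simp: p_def exp_jet2_def coeff_sum coeff_monom numeral_2_eq_2)
  then have "exp_jet2 a t N"
    using exp_jet2_cancel_linear_power[of a t "s - t" N] p \<open>t \<le> s\<close> by simp
  obtain r where "real s - 1 < r" and am: "\<forall>x\<in>{-r..0}. abs_monotonic_at p ([:1, -a:] ^ s) x"
    using radius_abs_mono_gtE[OF assms(2)[folded p_def]] assms(1) by auto
  then have "\<forall>x\<in>{-r..0}. poly ([:1, -a:] ^ t) x \<noteq> 0"
    and "abs_mono_on (\<lambda>y. poly N y / poly ([:1, -a:] ^ t) y) {-r..0}"
    using poles by (auto simp: abs_monotonic_at_def abs_mono_on_def rf)
  then have "abs_mono_on (poly N) {-r..0}"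
    using abs_mono_on_numerator[OF a] by blast
  then have "r \<le> real t - 1"
    using exp_jet2_abs_mono_radius_le[OF \<open>degree N \<le> t\<close> \<open>exp_jet2 a t N\<close> a]
      \<open>real s - 1 < r\<close> assms(1) by simp
  with \<open>t \<le> s\<close> \<open>real s - 1 < r\<close> show False by linarith
qed

end
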